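(* The top cycle is the only robust dominant set rule that satisfies set non-imposition.
   Context: Let $A$ be a finite set of alternatives; preference profiles $R$ consist of strict total orders $\succ_i$ on $A$ for the voters $i$ of a finite non-empty electorate $N\subseteq\{1,2,\dots\}$, and $\mathcal{R}^*(A)$ is the set of all such profiles over all electorates. The majority margin is $g_R(x,y)=|\{i: x\succ_i y\}|-|\{i: y\succ_i x\}|$; $x\succsim_R y$ iff $g_R(x,y)\ge0$, with strict part $\succ_R$. A non-empty $X\subseteq A$ is dominant in $R$ if $x\succ_R y$ for all $x\in X$, $y\in A\setminus X$. The top cycle $\mathrm{TC}(R)$ is the inclusion-smallest dominant set. A social choice correspondence (SCC) is a map $f:\mathcal{R}^*(A)\to 2^A\setminus\{\emptyset\}$. $f$ is a dominant set rule if $f(R)$ is dominant in $R$ for every $R$; it is robust if $f(R')\subseteq f(R)$ for all profiles $R,R'$ such that $f(R)$ is dominant in $R'$. $f$ satisfies set non-imposition if for every non-empty $X\subseteq A$ there is a profile $R$ with $f(R)=X$. *)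

theory Defs
  imports Main
begin

text \<open>Alternatives: the finite type 'a (A = UNIV).\<close>

type_synonym 'a profile = "nat set \<times> (nat \<Rightarrow> 'a rel)"

definition is_profile :: "'a profile \<Rightarrow> bool" where
  "is_profile p \<longleftrightarrow> finite (fst p) \<and> fst p \<noteq> {} \<and> 0 \<notin> fst p
     \<and> (\<forall>i\<in>fst p. strict_linear_order (snd p i))
     \<and> (\<forall>i. i \<notin> fst p \<longrightarrow> snd p i = {})"

definition margin :: "'a profile \<Rightarrow> 'a \<Rightarrow> 'a \<Rightarrow> int" where
  "margin p x y = int (card {i\<in>fst p. (x, y) \<in> snd p i}) - int (card {i\<in>fst p. (y, x) \<in> snd p i})"

definition maj_strict :: "'a profile \<Rightarrow> 'a \<Rightarrow> 'a \<Rightarrow> bool" where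
  "maj_strict p x y \<longleftrightarrow> margin p x y \<ge> 0 \<and> \<not> margin p y x \<ge> 0"

definition dominant :: "'a profile \<Rightarrow> 'a set \<Rightarrow> bool" where
  "dominant p X \<longleftrightarrow> X \<noteq> {} \<and> (\<forall>x\<in>X. \<forall>y. y \<notin> X \<longrightarrow> maj_strict p x y)"

definition top_cycle :: "'a profile \<Rightarrow> 'a set" where
  "top_cycle p = (THE X. dominant p X \<and> (\<forall>Y. dominant p Y \<longrightarrow> X \<subseteq> Y))"

definition is_scc :: "('a profile \<Rightarrow> 'a set) \<Rightarrow> bool" where
  "is_scc f \<longleftrightarrow> (\<forall>p. is_profile p \<longrightarrow> f p \<noteq> {})"

definition dominant_set_rule :: "('a profile \<Rightarrow> 'a set) \<Rightarrow> bool" where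
  "dominant_set_rule f \<longleftrightarrow> (\<forall>p. is_profile p \<longrightarrow> dominant p (f p))"

definition robust :: "('a profile \<Rightarrow> 'a set) \<Rightarrow> bool" where
  "robust f \<longleftrightarrow> (\<forall>p p'. is_profile p \<longrightarrow> is_profile p' \<longrightarrow> dominant p' (f p) \<longrightarrow> f p' \<subseteq> f p)"

definition set_non_imposition :: "('a profile \<Rightarrow> 'a set) \<Rightarrow> bool" where
  "set_non_imposition f \<longleftrightarrow> (\<forall>X. X \<noteq> {} \<longrightarrow> (\<exists>p. is_profile p \<and> f p = X))"

end

theory Submission
  imports Defs
begin

text \<open>Two dominant sets are nested, since each could otherwise beat the other strictly; so
on a finite set of alternatives a dominant set of least cardinality is the least dominant
set. For a robust dominant set rule f with set non-imposition, choose p' with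
f p' = TC(p): as TC(p) is dominant in p, robustness gives f p \<subseteq> f p' = TC(p), and
minimality of TC(p) gives the converse inclusion. Conversely, the top cycle is dominant and
robust by its minimality, and every non-empty X is the top cycle of a two-voter profile in
which both voters rank X on top but order X in opposite ways, so that all pairs in X tie.\<close>

lemma dominant_nested:
  assumes "dominant p X" "dominant p Y"
  shows "X \<subseteq> Y \<or> Y \<subseteq> X"
proof (rule ccontr)
  assume "\<not> (X \<subseteq> Y \<or> Y \<subseteq> X)"
  then obtain x y where "x \<in> X" "x \<notin> Y" "y \<in> Y" "y \<notin> X" by blast
  then have "maj_strict p x y" "maj_strict p y x" using assms unfolding dominant_def by auto
  then show False unfolding maj_strict_def by auto
qed

lemma dominant_UNIV: "dominant p UNIV"
  unfolding dominant_def by auto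

lemma ex_least_dominant:
  fixes p :: "'a::finite profile"
  shows "\<exists>X. dominant p X \<and> (\<forall>Y. dominant p Y \<longrightarrow> X \<subseteq> Y)"
proof -
  obtain X where X: "dominant p X" and X_min: "\<And>Y. dominant p Y \<Longrightarrow> card X \<le> card Y"
    using ex_has_least_nat[where P = "dominant p" and m = card] dominant_UNIV by blast
  have "X \<subseteq> Y" if Y: "dominant p Y" for Y
  proof (rule ccontr)
    assume "\<not> X \<subseteq> Y"
    then have "Y \<subset> X" using dominant_nested[OF X Y] by blast
    then have "card Y < card X" by (simp add: psubset_card_mono)
    with X_min[OF Y] show False by simp
  qed
  with X show ?thesis by blast
qed

lemma top_cycle_eqI:
  assumes "dominant p X" "\<And>Y. dominant p Y \<Longrightarrow> X \<subseteq> Y"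
  shows "top_cycle p = X"
  unfolding top_cycle_def by (rule the_equality) (use assms in blast)+

lemma top_cycle_dominant: "dominant p (top_cycle (p :: 'a::finite profile))"
  using ex_least_dominant[of p] top_cycle_eqI by metis

lemma top_cycle_subset_dominant:
  fixes p :: "'a::finite profile"
  shows "dominant p Y \<Longrightarrow> top_cycle p \<subseteq> Y"
  using ex_least_dominant[of p] top_cycle_eqI by metis

lemma top_cycle_eq_if_unbeaten:
  assumes "dominant p X" and unbeaten: "\<And>x y. x \<in> X \<Longrightarrow> \<not> maj_strict p y x"
  shows "top_cycle p = X"
proof (rule top_cycle_eqI[OF assms(1)])
  fix Y assume Y: "dominant p Y"
  show "X \<subseteq> Y"
  proof
    fix x assume "x \<in> X"
    obtain y where "y \<in> Y" using Y unfolding dominant_def by auto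
    with Y unbeaten[OF \<open>x \<in> X\<close>] show "x \<in> Y" unfolding dominant_def by blast
  qed
qed

definition rank_order :: "('a \<Rightarrow> 'b::linorder) \<Rightarrow> 'a rel" where
  "rank_order h = {(a, b). h a < h b}"

lemma strict_linear_order_rank_order:
  assumes "inj h"
  shows "strict_linear_order (rank_order h)"
  using assms
  unfolding rank_order_def strict_linear_order_on_def trans_def irrefl_def total_on_def inj_def
  by (auto, metis linorder_neqE)

definition two_voter_profile :: "'a rel \<Rightarrow> 'a rel \<Rightarrow> 'a profile" where
  "two_voter_profile r1 r2 = ({1, 2}, (\<lambda>_. {})(1 := r1, 2 := r2))"

lemma is_profile_two_voter_profile:
  assumes "strict_linear_order r1" "strict_linear_order r2"
  shows "is_profile (two_voter_profile r1 r2)"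
  using assms unfolding is_profile_def two_voter_profile_def by auto

lemma card_filter_one_two:
  "card {i \<in> {1, 2::nat}. P i} = of_bool (P 1) + of_bool (P 2)"
proof -
  have "{i \<in> {1, 2::nat}. P i} = (if P 1 then {1} else {}) \<union> (if P 2 then {2} else {})"
    by auto
  then show ?thesis by simp
qed

lemma margin_two_voter_profile:
  "margin (two_voter_profile r1 r2) x y =
     of_bool ((x, y) \<in> r1) + of_bool ((x, y) \<in> r2) - of_bool ((y, x) \<in> r1) - of_bool ((y, x) \<in> r2)"
  unfolding margin_def two_voter_profile_def fst_conv snd_conv card_filter_one_two by simp

lemma top_cycle_surj:
  fixes X :: "'a::finite set"
  assumes "X \<noteq> {}"
  shows "\<exists>p. is_profile p \<and> top_cycle p = X"
proof -
  obtain g :: "'a \<Rightarrow> nat" and n where g: "g ` UNIV = {..<n}" "inj g"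
    using finite_imp_inj_to_nat_seg[of "UNIV :: 'a set"] by (auto simp: lessThan_def)
  have g_less: "g x < n" for x using g(1) by auto
  define h1 where "h1 x = (if x \<in> X then int (g x) else int n + int (g x))" for x
  define h2 where "h2 x = (if x \<in> X then - int (g x) else int n + int (g x))" for x
  have "inj h1" using g(2) g_less unfolding inj_def h1_def
    by (metis add_left_cancel not_add_less1 of_nat_add of_nat_eq_iff of_nat_less_iff)
  moreover have "inj h2" using g(2) g_less unfolding inj_def h2_def
    by (smt (verit) of_nat_eq_iff of_nat_0_le_iff)
  moreover define p where "p = two_voter_profile (rank_order h1) (rank_order h2)"
  ultimately have "is_profile p"
    by (simp add: is_profile_two_voter_profile strict_linear_order_rank_order)
  have margin_p: "margin p a b = of_bool (h1 a < h1 b) + of_bool (h2 a < h2 b)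
                                 - of_bool (h1 b < h1 a) - of_bool (h2 b < h2 a)" for a b
    unfolding p_def margin_two_voter_profile rank_order_def by simp
  have "maj_strict p x y" if "x \<in> X" "y \<notin> X" for x y
    using that g_less[of x] g_less[of y]
    unfolding maj_strict_def by (auto simp: margin_p h1_def h2_def)
  with assms have "dominant p X" unfolding dominant_def by blast
  moreover have "\<not> maj_strict p y x" if "x \<in> X" for x y
    using that g_less[of x] g_less[of y] g(2)
    unfolding maj_strict_def inj_def by (auto simp: margin_p h1_def h2_def)
  ultimately have "top_cycle p = X" by (rule top_cycle_eq_if_unbeaten)
  with \<open>is_profile p\<close> show ?thesis by blast
qed

theorem lemma1:
  fixes f :: "'a::finite profile \<Rightarrow> 'a set"
  assumes "is_scc f"
  shows "(dominant_set_rule f \<and> robust f \<and> set_non_imposition f)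
         \<longleftrightarrow> (\<forall>p. is_profile p \<longrightarrow> f p = top_cycle p)"
proof
  assume f: "dominant_set_rule f \<and> robust f \<and> set_non_imposition f"
  show "\<forall>p. is_profile p \<longrightarrow> f p = top_cycle p"
  proof (intro allI impI)
    fix p :: "'a profile" assume p: "is_profile p"
    have "top_cycle p \<noteq> {}" using top_cycle_dominant unfolding dominant_def by blast
    then obtain p' where p': "is_profile p'" "f p' = top_cycle p"
      using f unfolding set_non_imposition_def by blast
    have "f p \<subseteq> f p'" using f p p' top_cycle_dominant unfolding robust_def by metis
    moreover have "top_cycle p \<subseteq> f p"
      using f p top_cycle_subset_dominant unfolding dominant_set_rule_def by blast
    ultimately show "f p = top_cycle p" using p' by blast
  qed
next
  assume f: "\<forall>p. is_profile p \<longrightarrow> f p = top_cycle p"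
  show "dominant_set_rule f \<and> robust f \<and> set_non_imposition f"
    unfolding dominant_set_rule_def robust_def set_non_imposition_def
    using f top_cycle_dominant top_cycle_subset_dominant top_cycle_surj by metis
qed

end
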